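(* Let $(L,\le,\bot,\top)$ be a complete lattice and $(\&_i,\swarrow^i,\nwarrow_i)$, $i=1,\dots,n$, adjoint triples on $L$ with $x\,\&_i\,\top=\top\,\&_i\,x=x$ for all $x\in L$ and all $i$. Let $(A,B,R,\sigma)$ be a normalized context whose concept lattice $\mathcal{M}$ satisfies the ascending chain condition and which has a decomposition into independent subcontexts $\{(A_\lambda,B_\lambda,R_\lambda,\sigma_\lambda)\mid\lambda\in\Lambda\}$. Then for every $\lambda\in\Lambda$ the set $$K_\lambda=\{\langle g,f\rangle\in\mathcal{M}\mid\langle g,f\rangle=\textstyle\bigwedge M_g^{A_\lambda}\}\cup\{\langle g_\top,f_\bot\rangle,\langle g_\bot,f_\top\rangle\}$$ is a complete block of $\mathcal{M}$.
   Context: An adjoint triple on $L$ is a triple of maps $\&,\swarrow,\nwarrow\colon L\times L\to L$ with $x\le z\swarrow y\iff x\& y\le z\iff y\le z\nwarrow x$. A context is $(A,B,R,\sigma)$ with $A,B$ non-empty, $R\colon A\times B\to L$, $\sigma\colon A\times B\to\{1,\dots,n\}$; normalized means every $a\in A$ has $b_1,b_2$ with $R(a,b_1)\ne\bot$, $R(a,b_2)=\bot$, and every $b\in B$ has $a_1,a_2$ with $R(a_1,b)\ne\bot$, $R(a_2,b)=\bot$. For $g\colon B\to L$, $f\colon A\to L$: $g^\uparrow(a)=\inf_{b}R(a,b)\swarrow^{\sigma(a,b)}g(b)$, $f^\downarrow(b)=\inf_{a}R(a,b)\nwarrow_{\sigma(a,b)}f(a)$. $\mathcal{M}$ is the complete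 lattice of pairs $\langle g,f\rangle$ with $g^\uparrow=f$, $f^\downarrow=g$, ordered by $g_1\le g_2$ pointwise; its top is $\langle g_\top,f_\bot\rangle$ and bottom $\langle g_\bot,f_\top\rangle$, where $g_\top,g_\bot,f_\top,f_\bot$ are constant maps with the indicated values. $\phi_{a,x}\colon A\to L$ takes value $x$ at $a$ and $\bot$ elsewhere. Meet-irreducible concepts (elements $c\ne$ top with $c=d\wedge e\Rightarrow c\in\{d,e\}$) all have the form $\langle\phi_{a,x}^\downarrow,\phi_{a,x}^{\downarrow\uparrow}\rangle$. For $A'\subseteq A$, $M_F^{A'}$ is the set of meet-irreducible concepts equal to $\langle\phi_{a,x}^\downarrow,\phi_{a,x}^{\downarrow\uparrow}\rangle$ for some $a\in A'$, $x\in L$, and $M_g^{A'}=\{c\in M_F^{A'}\mid\langle g,f\rangle\preceq c\}$. Separable subcontext: $(Y,X,R_{Y\times X},\sigma_{Y\times X})$ with $Y\subsetneq A$, $X\subsetneq B$ non-empty, some $R(a,b)\ne\bot$ with $a\in Y,b\in X$, $R=\bot$ on $Y\times(B\setminus X)$ and on $(A\setminus Y)\times X$. $\&$ has zero-divisors if $x\&y=\bot$ for some $x,y\neq\bot$. Decomposition into independent subcontexts: non-empty $\Lambda$, each $(A_\lambda,B_\lambda,R_\lambda,\sigma_\lambda)$ (restrictions) separable, $\{A_\lambda\}$ partitions $A$, $\{B_\lambda\}$ partitions $B$, and $\&_{\sigma(a,b)}$ has no zero-divisors whenever $(a,b)\in((A\setminus A_\lambda)\times B_\lambda)\cup(A_\lambda\times(B\setminus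 B_\lambda))$ for some $\lambda$. For a bounded lattice $(M,\preceq,\bot,\top)$, a block is a sublattice $K\subsetneq M$ with $K\setminus\{\bot,\top\}\ne\varnothing$ and $(\{x\mid k\preceq x\}\cup\{x\mid x\preceq k\})\setminus\{\bot,\top\}\subseteq K$ for all $k\in K\setminus\{\bot,\top\}$; it is complete if $\bot,\top\in K$. *)

theory Defs
  imports Main
begin

text \<open>The attribute set A is the type 'a,
the object set B is the type 'b (both non-empty automatically), L is a
complete lattice 'l.  The adjoint triples are indexed by naturals 1..n:
cj i = the conjunctor, ld i = the left implication (z swarrow y written ld i z y),
rd i = the right implication (z nwarrow x written rd i z x).\<close>

definition adjoint_triple :: "('l::complete_lattice \<Rightarrow> 'l \<Rightarrow> 'l) \<Rightarrow> ('l \<Rightarrow> 'l \<Rightarrow> 'l) \<Rightarrow> ('l \<Rightarrow> 'l \<Rightarrow> 'l) \<Rightarrow> bool" where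
  "adjoint_triple c l r \<longleftrightarrow>
     (\<forall>x y z. (x \<le> l z y \<longleftrightarrow> c x y \<le> z) \<and> (c x y \<le> z \<longleftrightarrow> y \<le> r z x))"

definition normalized :: "('a \<Rightarrow> 'b \<Rightarrow> 'l::complete_lattice) \<Rightarrow> bool" where
  "normalized R \<longleftrightarrow>
     (\<forall>a. \<exists>b1 b2. R a b1 \<noteq> bot \<and> R a b2 = bot) \<and>
     (\<forall>b. \<exists>a1 a2. R a1 b \<noteq> bot \<and> R a2 b = bot)"

definition up_op :: "(nat \<Rightarrow> 'l::complete_lattice \<Rightarrow> 'l \<Rightarrow> 'l) \<Rightarrow> ('a \<Rightarrow> 'b \<Rightarrow> 'l) \<Rightarrow> ('a \<Rightarrow> 'b \<Rightarrow> nat)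
    \<Rightarrow> ('b \<Rightarrow> 'l) \<Rightarrow> ('a \<Rightarrow> 'l)" where
  "up_op ld R \<sigma> g = (\<lambda>a. INF b. ld (\<sigma> a b) (R a b) (g b))"

definition down_op :: "(nat \<Rightarrow> 'l::complete_lattice \<Rightarrow> 'l \<Rightarrow> 'l) \<Rightarrow> ('a \<Rightarrow> 'b \<Rightarrow> 'l) \<Rightarrow> ('a \<Rightarrow> 'b \<Rightarrow> nat)
    \<Rightarrow> ('a \<Rightarrow> 'l) \<Rightarrow> ('b \<Rightarrow> 'l)" where
  "down_op rd R \<sigma> f = (\<lambda>b. INF a. rd (\<sigma> a b) (R a b) (f a))"

definition concepts :: "(nat \<Rightarrow> 'l::complete_lattice \<Rightarrow> 'l \<Rightarrow> 'l) \<Rightarrow> (nat \<Rightarrow> 'l \<Rightarrow> 'l \<Rightarrow> 'l)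
    \<Rightarrow> ('a \<Rightarrow> 'b \<Rightarrow> 'l) \<Rightarrow> ('a \<Rightarrow> 'b \<Rightarrow> nat) \<Rightarrow> (('b \<Rightarrow> 'l) \<times> ('a \<Rightarrow> 'l)) set" where
  "concepts ld rd R \<sigma> = {(g, f). up_op ld R \<sigma> g = f \<and> down_op rd R \<sigma> f = g}"

definition cle :: "('b \<Rightarrow> 'l::complete_lattice) \<times> ('a \<Rightarrow> 'l) \<Rightarrow> ('b \<Rightarrow> 'l) \<times> ('a \<Rightarrow> 'l) \<Rightarrow> bool" where
  "cle c d \<longleftrightarrow> fst c \<le> fst d"

definition cInf :: "(nat \<Rightarrow> 'l::complete_lattice \<Rightarrow> 'l \<Rightarrow> 'l) \<Rightarrow> (nat \<Rightarrow> 'l \<Rightarrow> 'l \<Rightarrow> 'l)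
    \<Rightarrow> ('a \<Rightarrow> 'b \<Rightarrow> 'l) \<Rightarrow> ('a \<Rightarrow> 'b \<Rightarrow> nat)
    \<Rightarrow> (('b \<Rightarrow> 'l) \<times> ('a \<Rightarrow> 'l)) set \<Rightarrow> ('b \<Rightarrow> 'l) \<times> ('a \<Rightarrow> 'l)" where
  "cInf ld rd R \<sigma> S = (THE c. c \<in> concepts ld rd R \<sigma> \<and> (\<forall>d\<in>S. cle c d) \<and>
      (\<forall>e\<in>concepts ld rd R \<sigma>. (\<forall>d\<in>S. cle e d) \<longrightarrow> cle e c))"

definition cSup :: "(nat \<Rightarrow> 'l::complete_lattice \<Rightarrow> 'l \<Rightarrow> 'l) \<Rightarrow> (nat \<Rightarrow> 'l \<Rightarrow> 'l \<Rightarrow> 'l)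
    \<Rightarrow> ('a \<Rightarrow> 'b \<Rightarrow> 'l) \<Rightarrow> ('a \<Rightarrow> 'b \<Rightarrow> nat)
    \<Rightarrow> (('b \<Rightarrow> 'l) \<times> ('a \<Rightarrow> 'l)) set \<Rightarrow> ('b \<Rightarrow> 'l) \<times> ('a \<Rightarrow> 'l)" where
  "cSup ld rd R \<sigma> S = (THE c. c \<in> concepts ld rd R \<sigma> \<and> (\<forall>d\<in>S. cle d c) \<and>
      (\<forall>e\<in>concepts ld rd R \<sigma>. (\<forall>d\<in>S. cle d e) \<longrightarrow> cle c e))"

definition ctop :: "('b \<Rightarrow> 'l::complete_lattice) \<times> ('a \<Rightarrow> 'l)" where
  "ctop = ((\<lambda>_. top), (\<lambda>_. bot))"

definition cbot :: "('b \<Rightarrow> 'l::complete_lattice) \<times> ('a \<Rightarrow> 'l)" where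
  "cbot = ((\<lambda>_. bot), (\<lambda>_. top))"

definition meet_irreducible :: "(nat \<Rightarrow> 'l::complete_lattice \<Rightarrow> 'l \<Rightarrow> 'l) \<Rightarrow> (nat \<Rightarrow> 'l \<Rightarrow> 'l \<Rightarrow> 'l)
    \<Rightarrow> ('a \<Rightarrow> 'b \<Rightarrow> 'l) \<Rightarrow> ('a \<Rightarrow> 'b \<Rightarrow> nat) \<Rightarrow> ('b \<Rightarrow> 'l) \<times> ('a \<Rightarrow> 'l) \<Rightarrow> bool" where
  "meet_irreducible ld rd R \<sigma> c \<longleftrightarrow> c \<in> concepts ld rd R \<sigma> \<and> c \<noteq> ctop \<and>
     (\<forall>d\<in>concepts ld rd R \<sigma>. \<forall>e\<in>concepts ld rd R \<sigma>.
        c = cInf ld rd R \<sigma> {d, e} \<longrightarrow> c = d \<or> c = e)"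

definition phi :: "'a \<Rightarrow> 'l::complete_lattice \<Rightarrow> 'a \<Rightarrow> 'l" where
  "phi a x = (\<lambda>a'. if a' = a then x else bot)"

definition MF :: "(nat \<Rightarrow> 'l::complete_lattice \<Rightarrow> 'l \<Rightarrow> 'l) \<Rightarrow> (nat \<Rightarrow> 'l \<Rightarrow> 'l \<Rightarrow> 'l)
    \<Rightarrow> ('a \<Rightarrow> 'b \<Rightarrow> 'l) \<Rightarrow> ('a \<Rightarrow> 'b \<Rightarrow> nat) \<Rightarrow> 'a set \<Rightarrow> (('b \<Rightarrow> 'l) \<times> ('a \<Rightarrow> 'l)) set" where
  "MF ld rd R \<sigma> A' = {c. meet_irreducible ld rd R \<sigma> c \<and>
      (\<exists>a\<in>A'. \<exists>x. c = (down_op rd R \<sigma> (phi a x), up_op ld R \<sigma> (down_op rd R \<sigma> (phi a x))))}"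

definition Mg :: "(nat \<Rightarrow> 'l::complete_lattice \<Rightarrow> 'l \<Rightarrow> 'l) \<Rightarrow> (nat \<Rightarrow> 'l \<Rightarrow> 'l \<Rightarrow> 'l)
    \<Rightarrow> ('a \<Rightarrow> 'b \<Rightarrow> 'l) \<Rightarrow> ('a \<Rightarrow> 'b \<Rightarrow> nat) \<Rightarrow> 'a set \<Rightarrow> ('b \<Rightarrow> 'l) \<times> ('a \<Rightarrow> 'l)
    \<Rightarrow> (('b \<Rightarrow> 'l) \<times> ('a \<Rightarrow> 'l)) set" where
  "Mg ld rd R \<sigma> A' c = {d \<in> MF ld rd R \<sigma> A'. cle c d}"

definition acc_concepts :: "(nat \<Rightarrow> 'l::complete_lattice \<Rightarrow> 'l \<Rightarrow> 'l) \<Rightarrow> (nat \<Rightarrow> 'l \<Rightarrow> 'l \<Rightarrow> 'l)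
    \<Rightarrow> ('a \<Rightarrow> 'b \<Rightarrow> 'l) \<Rightarrow> ('a \<Rightarrow> 'b \<Rightarrow> nat) \<Rightarrow> bool" where
  "acc_concepts ld rd R \<sigma> \<longleftrightarrow>
     \<not> (\<exists>ch :: nat \<Rightarrow> ('b \<Rightarrow> 'l) \<times> ('a \<Rightarrow> 'l).
          (\<forall>k. ch k \<in> concepts ld rd R \<sigma>) \<and>
          (\<forall>k. cle (ch k) (ch (Suc k)) \<and> ch k \<noteq> ch (Suc k)))"

definition separable :: "('a \<Rightarrow> 'b \<Rightarrow> 'l::complete_lattice) \<Rightarrow> 'a set \<Rightarrow> 'b set \<Rightarrow> bool" where
  "separable R Y X \<longleftrightarrow> Y \<subset> UNIV \<and> X \<subset> UNIV \<and> Y \<noteq> {} \<and> X \<noteq> {} \<and>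
     (\<exists>a\<in>Y. \<exists>b\<in>X. R a b \<noteq> bot) \<and>
     (\<forall>a\<in>Y. \<forall>b. b \<notin> X \<longrightarrow> R a b = bot) \<and>
     (\<forall>a. a \<notin> Y \<longrightarrow> (\<forall>b\<in>X. R a b = bot))"

definition no_zero_divisors :: "('l::complete_lattice \<Rightarrow> 'l \<Rightarrow> 'l) \<Rightarrow> bool" where
  "no_zero_divisors c \<longleftrightarrow> \<not> (\<exists>x y. x \<noteq> bot \<and> y \<noteq> bot \<and> c x y = bot)"

definition independent_decomposition :: "(nat \<Rightarrow> 'l::complete_lattice \<Rightarrow> 'l \<Rightarrow> 'l)
    \<Rightarrow> ('a \<Rightarrow> 'b \<Rightarrow> 'l) \<Rightarrow> ('a \<Rightarrow> 'b \<Rightarrow> nat) \<Rightarrow> 'k set \<Rightarrow> ('k \<Rightarrow> 'a set) \<Rightarrow> ('k \<Rightarrow> 'b set) \<Rightarrow> bool" where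
  "independent_decomposition cj R \<sigma> \<Lambda> AA BB \<longleftrightarrow>
     \<Lambda> \<noteq> {} \<and>
     (\<forall>l\<in>\<Lambda>. separable R (AA l) (BB l)) \<and>
     (\<forall>l\<in>\<Lambda>. \<forall>m\<in>\<Lambda>. l \<noteq> m \<longrightarrow> AA l \<inter> AA m = {}) \<and> (\<Union>l\<in>\<Lambda>. AA l) = UNIV \<and>
     (\<forall>l\<in>\<Lambda>. \<forall>m\<in>\<Lambda>. l \<noteq> m \<longrightarrow> BB l \<inter> BB m = {}) \<and> (\<Union>l\<in>\<Lambda>. BB l) = UNIV \<and>
     (\<forall>l\<in>\<Lambda>. \<forall>a b. ((a \<notin> AA l \<and> b \<in> BB l) \<or> (a \<in> AA l \<and> b \<notin> BB l))
         \<longrightarrow> no_zero_divisors (cj (\<sigma> a b)))"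

definition is_block :: "'c set \<Rightarrow> ('c \<Rightarrow> 'c \<Rightarrow> bool) \<Rightarrow> ('c \<Rightarrow> 'c \<Rightarrow> 'c) \<Rightarrow> ('c \<Rightarrow> 'c \<Rightarrow> 'c)
    \<Rightarrow> 'c \<Rightarrow> 'c \<Rightarrow> 'c set \<Rightarrow> bool" where
  "is_block M le mt jn bt tp K \<longleftrightarrow>
     K \<subset> M \<and> (\<forall>x\<in>K. \<forall>y\<in>K. mt x y \<in> K \<and> jn x y \<in> K) \<and>
     K - {bt, tp} \<noteq> {} \<and>
     (\<forall>k\<in>K - {bt, tp}. ({x\<in>M. le k x} \<union> {x\<in>M. le x k}) - {bt, tp} \<subseteq> K)"

definition is_complete_block :: "'c set \<Rightarrow> ('c \<Rightarrow> 'c \<Rightarrow> bool) \<Rightarrow> ('c \<Rightarrow> 'c \<Rightarrow> 'c) \<Rightarrow> ('c \<Rightarrow> 'c \<Rightarrow> 'c)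
    \<Rightarrow> 'c \<Rightarrow> 'c \<Rightarrow> 'c set \<Rightarrow> bool" where
  "is_complete_block M le mt jn bt tp K \<longleftrightarrow> is_block M le mt jn bt tp K \<and> bt \<in> K \<and> tp \<in> K"

definition Kset :: "(nat \<Rightarrow> 'l::complete_lattice \<Rightarrow> 'l \<Rightarrow> 'l) \<Rightarrow> (nat \<Rightarrow> 'l \<Rightarrow> 'l \<Rightarrow> 'l)
    \<Rightarrow> ('a \<Rightarrow> 'b \<Rightarrow> 'l) \<Rightarrow> ('a \<Rightarrow> 'b \<Rightarrow> nat) \<Rightarrow> 'a set \<Rightarrow> (('b \<Rightarrow> 'l) \<times> ('a \<Rightarrow> 'l)) set" where
  "Kset ld rd R \<sigma> A' =
     {c \<in> concepts ld rd R \<sigma>. c = cInf ld rd R \<sigma> (Mg ld rd R \<sigma> A' c)} \<union> {ctop, cbot}"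

end

theory Submission
  imports Defs
begin

(*
  The extent g of a concept other than the top is supported inside a single B_lambda:
  once f a is non-bot for some a in A_mu, the absence of zero divisors across the
  decomposition (where R = bot) forces g b = bot for all b outside B_mu. So the concepts
  other than top and bottom fall into classes indexed by Lambda, and each class is convex
  in M, since comparable concepts share a point of their supports; a convex set together
  with top and bottom is a complete block.
  Under the ascending chain condition every concept is the meet of the meet-irreducible
  concepts of the form phi_{a,x} above it, and by the same support argument all of them
  have a in A_mu when the concept lies in class mu. Hence c = Inf M_g^{A_lambda} holds
  precisely for the concepts of class lambda (for any other class M_g^{A_lambda} is empty
  and its meet is the top), so K_lambda is class lambda together with top and bottom.
*)

lemma is_complete_blockI:
  assumes "K \<subset> M" and "bt \<in> K" and "tp \<in> K" and "K - {bt, tp} \<noteq> {}"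
    and bounds: "\<And>x. x \<in> M \<Longrightarrow> le bt x \<and> le x tp"
    and meet: "\<And>x y. x \<in> M \<Longrightarrow> y \<in> M \<Longrightarrow> mt x y \<in> M \<and> le (mt x y) x"
    and join: "\<And>x y. x \<in> M \<Longrightarrow> y \<in> M \<Longrightarrow> jn x y \<in> M \<and> le x (jn x y)"
    and absorb: "\<And>x y. x \<in> M \<Longrightarrow> y \<in> M \<Longrightarrow> le x y \<Longrightarrow>
                   mt x y = x \<and> mt y x = x \<and> jn x y = y \<and> jn y x = y"
    and convex: "\<And>k x. k \<in> K - {bt, tp} \<Longrightarrow> x \<in> M - {bt, tp} \<Longrightarrow> le k x \<or> le x k \<Longrightarrow> x \<in> K"
  shows "is_complete_block M le mt jn bt tp K"
proof -
  have closed: "mt x y \<in> K \<and> jn x y \<in> K" if "x \<in> K" "y \<in> K" for x y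
  proof -
    have "x \<in> M" "y \<in> M" "bt \<in> M" "tp \<in> M" using that assms(1-3) by blast+
    show ?thesis
    proof (cases "x \<in> {bt, tp}")
      case True
      then show ?thesis using absorb bounds \<open>x \<in> M\<close> \<open>y \<in> M\<close> that assms(2,3) by fastforce
    next
      case False
      then show ?thesis using meet join convex \<open>x \<in> M\<close> \<open>y \<in> M\<close> that assms(2,3) by blast
    qed
  qed
  show ?thesis
    unfolding is_complete_block_def is_block_def using assms(1-4) closed convex by blast
qed

lemma cle_trans: "cle x y \<Longrightarrow> cle y z \<Longrightarrow> cle x z"
  unfolding cle_def by (rule order_trans)

lemma cle_ctop: "cle c ctop"
  unfolding cle_def ctop_def by (simp add: le_fun_def)

lemma cbot_cle: "cle cbot c"
  unfolding cle_def cbot_def by (simp add: le_fun_def)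

locale multi_adjoint_context =
  fixes cj ld rd :: "nat \<Rightarrow> 'l::complete_lattice \<Rightarrow> 'l \<Rightarrow> 'l"
    and n :: nat
    and R :: "'a \<Rightarrow> 'b \<Rightarrow> 'l"
    and \<sigma> :: "'a \<Rightarrow> 'b \<Rightarrow> nat"
  assumes adjoint: "\<forall>i\<in>{1..n}. adjoint_triple (cj i) (ld i) (rd i)"
    and \<sigma>_range: "\<forall>a b. \<sigma> a b \<in> {1..n}"
begin

abbreviation "up \<equiv> up_op ld R \<sigma>"
abbreviation "down \<equiv> down_op rd R \<sigma>"
abbreviation "\<M> \<equiv> concepts ld rd R \<sigma>"

lemma conj_le_iff_left: "cj (\<sigma> a b) x y \<le> z \<longleftrightarrow> x \<le> ld (\<sigma> a b) z y"
  using adjoint \<sigma>_range unfolding adjoint_triple_def by metis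

lemma conj_le_iff_right: "cj (\<sigma> a b) x y \<le> z \<longleftrightarrow> y \<le> rd (\<sigma> a b) z x"
  using adjoint \<sigma>_range unfolding adjoint_triple_def by metis

lemma conj_bot_left [simp]: "cj (\<sigma> a b) bot y = bot"
  using conj_le_iff_left[of a b bot y bot] by (simp add: bot_unique)

lemma conj_bot_right [simp]: "cj (\<sigma> a b) x bot = bot"
  using conj_le_iff_right[of a b x bot bot] by (simp add: bot_unique)

lemma conj_mono_right: "y \<le> y' \<Longrightarrow> cj (\<sigma> a b) x y \<le> cj (\<sigma> a b) x y'"
  by (meson conj_le_iff_right order_refl order_trans)

lemma le_down_iff: "g \<le> down f \<longleftrightarrow> (\<forall>a b. cj (\<sigma> a b) (f a) (g b) \<le> R a b)"
  unfolding down_op_def le_fun_def le_INF_iff using conj_le_iff_right by blast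

lemma le_up_iff: "f \<le> up g \<longleftrightarrow> (\<forall>a b. cj (\<sigma> a b) (f a) (g b) \<le> R a b)"
  unfolding up_op_def le_fun_def le_INF_iff using conj_le_iff_left by blast

lemma le_down_iff_le_up: "g \<le> down f \<longleftrightarrow> f \<le> up g"
  by (simp add: le_down_iff le_up_iff)

lemma le_down_up: "g \<le> down (up g)"
  by (simp add: le_down_iff_le_up)

lemma le_up_down: "f \<le> up (down f)"
  by (simp flip: le_down_iff_le_up)

lemma up_antimono: "g \<le> g' \<Longrightarrow> up g' \<le> up g"
  by (meson le_down_iff_le_up le_down_up order_trans)

lemma down_antimono: "f \<le> f' \<Longrightarrow> down f' \<le> down f"
  by (meson le_down_iff_le_up le_up_down order_trans)

lemma down_up_down [simp]: "down (up (down f)) = down f"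
  by (simp add: antisym down_antimono le_down_up le_up_down)

lemma up_down_up [simp]: "up (down (up g)) = up g"
  by (simp add: antisym up_antimono le_down_up le_up_down)

lemma down_bot: "down (\<lambda>_. bot) = (\<lambda>_. top)"
  unfolding top_fun_def[symmetric] by (rule top_unique[THEN iffD1]) (simp add: le_down_iff)

lemma up_bot: "up (\<lambda>_. bot) = (\<lambda>_. top)"
  unfolding top_fun_def[symmetric] by (rule top_unique[THEN iffD1]) (simp add: le_up_iff)

lemma mem_concepts_iff: "(g, f) \<in> \<M> \<longleftrightarrow> up g = f \<and> down f = g"
  by (simp add: concepts_def)

lemma concept_snd: "c \<in> \<M> \<Longrightarrow> snd c = up (fst c)"
  by (cases c) (simp add: mem_concepts_iff)

lemma concept_fst: "c \<in> \<M> \<Longrightarrow> fst c = down (snd c)"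
  by (cases c) (simp add: mem_concepts_iff)

lemma concept_eqI: "c \<in> \<M> \<Longrightarrow> d \<in> \<M> \<Longrightarrow> fst c = fst d \<Longrightarrow> c = d"
  by (metis concept_snd prod.collapse)

lemma cle_antisym: "c \<in> \<M> \<Longrightarrow> d \<in> \<M> \<Longrightarrow> cle c d \<Longrightarrow> cle d c \<Longrightarrow> c = d"
  unfolding cle_def by (blast intro: concept_eqI antisym)

lemma cInf_eqI:
  assumes "c \<in> \<M>" "\<forall>d\<in>S. cle c d" "\<forall>e\<in>\<M>. (\<forall>d\<in>S. cle e d) \<longrightarrow> cle e c"
  shows "cInf ld rd R \<sigma> S = c"
  unfolding cInf_def using assms cle_antisym by (intro the_equality) blast+

lemma cSup_eqI:
  assumes "c \<in> \<M>" "\<forall>d\<in>S. cle d c" "\<forall>e\<in>\<M>. (\<forall>d\<in>S. cle d e) \<longrightarrow> cle c e"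
  shows "cSup ld rd R \<sigma> S = c"
  unfolding cSup_def using assms cle_antisym by (intro the_equality) blast+

lemma INF_extents_in_concepts:
  assumes "S \<subseteq> \<M>"
  shows "((INF d\<in>S. fst d), up (INF d\<in>S. fst d)) \<in> \<M>"
proof -
  let ?g = "INF d\<in>S. fst d"
  have "down (up ?g) \<le> fst d" if "d \<in> S" for d
  proof -
    have "down (up ?g) \<le> down (up (fst d))"
      using that by (intro down_antimono up_antimono INF_lower)
    also have "\<dots> = fst d"
      using assms that concept_snd concept_fst by (metis subsetD)
    finally show ?thesis .
  qed
  then have "down (up ?g) = ?g"
    by (simp add: antisym le_down_up INF_greatest)
  then show ?thesis
    by (simp add: mem_concepts_iff)
qed

lemma cInf_eq:
  assumes "S \<subseteq> \<M>"
  shows "cInf ld rd R \<sigma> S = ((INF d\<in>S. fst d), up (INF d\<in>S. fst d))"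
  using INF_extents_in_concepts[OF assms]
  by (intro cInf_eqI) (auto simp: cle_def INF_lower INF_greatest)

lemma cInf_in_concepts: "S \<subseteq> \<M> \<Longrightarrow> cInf ld rd R \<sigma> S \<in> \<M>"
  by (simp add: cInf_eq INF_extents_in_concepts)

lemma fst_cInf: "S \<subseteq> \<M> \<Longrightarrow> fst (cInf ld rd R \<sigma> S) = (INF d\<in>S. fst d)"
  by (simp add: cInf_eq)

lemma cSup_eq:
  assumes "S \<subseteq> \<M>"
  shows "cSup ld rd R \<sigma> S = (down (up (SUP d\<in>S. fst d)), up (SUP d\<in>S. fst d))"
proof (rule cSup_eqI)
  let ?g = "SUP d\<in>S. fst d"
  show "(down (up ?g), up ?g) \<in> \<M>"
    by (simp add: mem_concepts_iff)
  show "\<forall>d\<in>S. cle d (down (up ?g), up ?g)"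
    unfolding cle_def by (auto intro: order_trans[OF SUP_upper le_down_up])
  show "\<forall>e\<in>\<M>. (\<forall>d\<in>S. cle d e) \<longrightarrow> cle (down (up ?g), up ?g) e"
  proof (intro ballI impI)
    fix e assume "e \<in> \<M>" and "\<forall>d\<in>S. cle d e"
    then have "down (up ?g) \<le> down (up (fst e))"
      unfolding cle_def by (intro down_antimono up_antimono SUP_least) blast
    then show "cle (down (up ?g), up ?g) e"
      using \<open>e \<in> \<M>\<close> concept_snd concept_fst unfolding cle_def by (metis fst_conv)
  qed
qed


lemma cInf_pair_eq_left: "x \<in> \<M> \<Longrightarrow> cle x y \<Longrightarrow> cInf ld rd R \<sigma> {x, y} = x"
  by (rule cInf_eqI) (auto simp: cle_def)

lemma cSup_pair_eq_right: "y \<in> \<M> \<Longrightarrow> cle x y \<Longrightarrow> cSup ld rd R \<sigma> {x, y} = y"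
  by (rule cSup_eqI) (auto simp: cle_def)

lemma cSup_in_concepts: "S \<subseteq> \<M> \<Longrightarrow> cSup ld rd R \<sigma> S \<in> \<M>"
  by (simp add: cSup_eq mem_concepts_iff)

lemma cle_cSup: "S \<subseteq> \<M> \<Longrightarrow> d \<in> S \<Longrightarrow> cle d (cSup ld rd R \<sigma> S)"
  unfolding cle_def cSup_eq by (auto intro: order_trans[OF SUP_upper le_down_up])

definition phi_concept :: "'a \<Rightarrow> 'l \<Rightarrow> ('b \<Rightarrow> 'l) \<times> ('a \<Rightarrow> 'l)" where
  "phi_concept a x = (down (phi a x), up (down (phi a x)))"

lemma phi_concept_in_concepts: "phi_concept a x \<in> \<M>"
  unfolding phi_concept_def by (simp add: mem_concepts_iff)

lemma le_snd_phi_concept: "x \<le> snd (phi_concept a x) a"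
  using le_funD[OF le_up_down[of "phi a x"], of a] by (simp add: phi_concept_def phi_def)

lemma fst_concept_eq_INF_phi_concept:
  assumes "c \<in> \<M>"
  shows "fst c = (INF a. fst (phi_concept a (snd c a)))"
proof (rule antisym)
  have "phi a (snd c a) \<le> snd c" for a
    unfolding phi_def le_fun_def by simp
  then show "fst c \<le> (INF a. fst (phi_concept a (snd c a)))"
    using concept_fst[OF assms] unfolding phi_concept_def by (auto intro: INF_greatest down_antimono)
  have "cj (\<sigma> a b) (snd c a) ((INF a. fst (phi_concept a (snd c a))) b) \<le> R a b" for a b
  proof -
    have "(INF a. fst (phi_concept a (snd c a))) b \<le> down (phi a (snd c a)) b"
      unfolding phi_concept_def INF_apply by (rule INF_lower2) auto
    then have "cj (\<sigma> a b) (snd c a) ((INF a. fst (phi_concept a (snd c a))) b)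
        \<le> cj (\<sigma> a b) (phi a (snd c a) a) (down (phi a (snd c a)) b)"
      unfolding phi_def by (simp add: conj_mono_right)
    also have "\<dots> \<le> R a b"
      using le_down_iff[of "down (phi a (snd c a))" "phi a (snd c a)"] by blast
    finally show ?thesis .
  qed
  then show "(INF a. fst (phi_concept a (snd c a))) \<le> fst c"
    using concept_fst[OF assms] by (simp add: le_down_iff)
qed

lemma mem_Mg_iff:
  "d \<in> Mg ld rd R \<sigma> A' c \<longleftrightarrow>
     meet_irreducible ld rd R \<sigma> d \<and> (\<exists>a\<in>A'. \<exists>x. d = phi_concept a x) \<and> cle c d"
  by (auto simp: Mg_def MF_def phi_concept_def)

lemma Mg_subset_concepts: "Mg ld rd R \<sigma> A' c \<subseteq> \<M>"
  by (auto simp: mem_Mg_iff meet_irreducible_def)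

lemma Mg_antimono: "cle c d \<Longrightarrow> Mg ld rd R \<sigma> A' d \<subseteq> Mg ld rd R \<sigma> A' c"
  by (auto simp: mem_Mg_iff intro: cle_trans)

lemma wf_concepts_above:
  assumes "acc_concepts ld rd R \<sigma>"
  shows "wf {(d, c). c \<in> \<M> \<and> d \<in> \<M> \<and> cle c d \<and> c \<noteq> d}"
  using assms unfolding acc_concepts_def wf_iff_no_infinite_down_chain by auto

lemma concept_eq_INF_family:
  assumes "c \<in> \<M>"
  obtains D where "D \<subseteq> \<M>" "fst c = (INF d\<in>D. fst d)" "c \<in> D \<Longrightarrow> c \<in> Mg ld rd R \<sigma> UNIV c"
proof (cases "meet_irreducible ld rd R \<sigma> c")
  case True
  let ?D = "range (\<lambda>a. phi_concept a (snd c a))"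
  have "c \<in> Mg ld rd R \<sigma> UNIV c" if "c \<in> ?D"
    using that True by (auto simp: mem_Mg_iff cle_def)
  then show ?thesis
    using that[of ?D] fst_concept_eq_INF_phi_concept[OF assms] phi_concept_in_concepts
    by (auto simp: image_image)
next
  case False
  show ?thesis
  proof (cases "c = ctop")
    case True
    then show ?thesis
      using that[of "{}"] by (simp add: ctop_def top_fun_def)
  next
    case False
    with \<open>\<not> meet_irreducible ld rd R \<sigma> c\<close> assms obtain d e
      where "d \<in> \<M>" "e \<in> \<M>" "c = cInf ld rd R \<sigma> {d, e}" "c \<noteq> d" "c \<noteq> e"
      unfolding meet_irreducible_def by blast
    then show ?thesis
      using that[of "{d, e}"] by (simp add: fst_cInf)
  qed
qed

(* Upward well-founded induction: every d above c other than c itself is the meet of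
   Mg UNIV d, which is contained in Mg UNIV c. *)
lemma concept_eq_cInf_Mg:
  assumes acc: "acc_concepts ld rd R \<sigma>" and "c \<in> \<M>"
  shows "c = cInf ld rd R \<sigma> (Mg ld rd R \<sigma> UNIV c)"
  using \<open>c \<in> \<M>\<close>
proof (induction c rule: wf_induct_rule[OF wf_concepts_above[OF acc], case_names less])
  case (less c)
  let ?S = "Mg ld rd R \<sigma> UNIV c"
  have fst_cInf_S: "fst (cInf ld rd R \<sigma> ?S) = (INF d\<in>?S. fst d)"
    by (simp add: fst_cInf Mg_subset_concepts)
  obtain D where D: "D \<subseteq> \<M>" "fst c = (INF d\<in>D. fst d)" "c \<in> D \<Longrightarrow> c \<in> ?S"
    using concept_eq_INF_family[OF less.prems] by blast
  have "fst (cInf ld rd R \<sigma> ?S) \<le> fst d" if "d \<in> D" for d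
  proof (cases "d = c")
    case True
    then show ?thesis
      using D(3) that unfolding fst_cInf_S by (simp add: INF_lower)
  next
    case False
    have "cle c d"
      using D(2) that unfolding cle_def by (simp add: INF_lower)
    with False have "d = cInf ld rd R \<sigma> (Mg ld rd R \<sigma> UNIV d)"
      using less.IH D(1) that less.prems by blast
    then have "fst d = (INF e\<in>Mg ld rd R \<sigma> UNIV d. fst e)"
      by (metis fst_cInf Mg_subset_concepts)
    then show ?thesis
      unfolding fst_cInf_S using Mg_antimono[OF \<open>cle c d\<close>] by (simp add: INF_superset_mono)
  qed
  then have "fst (cInf ld rd R \<sigma> ?S) \<le> fst c"
    unfolding D(2) by (rule INF_greatest)
  moreover have "fst c \<le> fst (cInf ld rd R \<sigma> ?S)"
    unfolding fst_cInf_S by (auto simp: mem_Mg_iff cle_def intro: INF_greatest)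
  ultimately show ?case
    using less.prems by (intro concept_eqI) (auto simp: cInf_in_concepts Mg_subset_concepts)
qed

lemma intent_or_extent_eq_bot:
  assumes "c \<in> \<M>" "no_zero_divisors (cj (\<sigma> a b))" "R a b = bot"
  shows "snd c a = bot \<or> fst c b = bot"
proof -
  have "cj (\<sigma> a b) (snd c a) (fst c b) \<le> R a b"
    using concept_fst[OF assms(1)] le_down_iff[of "fst c" "snd c"] by simp
  then have "cj (\<sigma> a b) (snd c a) (fst c b) = bot"
    using assms(3) by (simp add: bot_unique)
  then show ?thesis
    using assms(2) unfolding no_zero_divisors_def by blast
qed

end

locale normalized_context = multi_adjoint_context cj ld rd n R \<sigma>
  for cj ld rd :: "nat \<Rightarrow> 'l::complete_lattice \<Rightarrow> 'l \<Rightarrow> 'l"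
    and n :: nat
    and R :: "'a \<Rightarrow> 'b \<Rightarrow> 'l"
    and \<sigma> :: "'a \<Rightarrow> 'b \<Rightarrow> nat" +
  assumes conj_top_unit: "\<forall>i\<in>{1..n}. \<forall>x. cj i x top = x \<and> cj i top x = x"
    and R_normalized: "normalized R"
begin

lemma conj_top_right [simp]: "cj (\<sigma> a b) x top = x"
  using conj_top_unit \<sigma>_range by metis

lemma conj_top_left [simp]: "cj (\<sigma> a b) top y = y"
  using conj_top_unit \<sigma>_range by metis

lemma bot_ne_top: "(bot::'l) \<noteq> top"
  using R_normalized unfolding normalized_def by (metis bot_unique top_greatest)

lemma up_top: "up (\<lambda>_. top) = (\<lambda>_. bot)"
proof
  fix a
  obtain b where "R a b = bot"
    using R_normalized unfolding normalized_def by blast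
  moreover have "cj (\<sigma> a b) (up (\<lambda>_. top) a) top \<le> R a b"
    using le_up_iff[of "up (\<lambda>_. top)" "\<lambda>_. top"] by blast
  ultimately show "up (\<lambda>_. top) a = bot"
    by (simp add: bot_unique)
qed

lemma down_top: "down (\<lambda>_. top) = (\<lambda>_. bot)"
proof
  fix b
  obtain a where "R a b = bot"
    using R_normalized unfolding normalized_def by blast
  moreover have "cj (\<sigma> a b) top (down (\<lambda>_. top) b) \<le> R a b"
    using le_down_iff[of "down (\<lambda>_. top)" "\<lambda>_. top"] by blast
  ultimately show "down (\<lambda>_. top) b = bot"
    by (simp add: bot_unique)
qed

lemma ctop_in_concepts: "ctop \<in> \<M>"
  unfolding ctop_def mem_concepts_iff by (simp add: up_top down_bot)

lemma cbot_in_concepts: "cbot \<in> \<M>"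
  unfolding cbot_def mem_concepts_iff by (simp add: up_bot down_top)

lemma ex_intent_ne_bot:
  assumes "c \<in> \<M>" "c \<noteq> ctop"
  shows "\<exists>a. snd c a \<noteq> bot"
proof (rule ccontr)
  assume "\<nexists>a. snd c a \<noteq> bot"
  then have "snd c = (\<lambda>_. bot)"
    by auto
  then have "c = ctop"
    using concept_fst[OF assms(1)] by (simp add: ctop_def down_bot prod_eq_iff)
  with assms(2) show False ..
qed

lemma ex_extent_ne_bot: "c \<in> \<M> \<Longrightarrow> c \<noteq> cbot \<Longrightarrow> \<exists>b. fst c b \<noteq> bot"
  using concept_eqI[OF _ cbot_in_concepts, of c] by (force simp: cbot_def)

lemma cInf_empty: "cInf ld rd R \<sigma> {} = ctop"
  by (simp add: cInf_eq ctop_def top_fun_def up_top)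

lemma phi_concept_bot: "phi_concept a bot = ctop"
proof -
  have phi_bot: "phi a bot = (\<lambda>_. bot)"
    unfolding phi_def by auto
  show ?thesis
    unfolding phi_concept_def ctop_def phi_bot down_bot up_top ..
qed

lemma fst_phi_concept_top: "fst (phi_concept a top) = R a"
proof (rule antisym)
  have "cj (\<sigma> a b) (phi a top a) (down (phi a top) b) \<le> R a b" for b
    using le_down_iff[of "down (phi a top)" "phi a top"] by blast
  then show "fst (phi_concept a top) \<le> R a"
    unfolding phi_concept_def phi_def le_fun_def by simp
  show "R a \<le> fst (phi_concept a top)"
    by (simp add: phi_concept_def le_down_iff phi_def)
qed

end

locale decomposed_context = normalized_context cj ld rd n R \<sigma>
  for cj ld rd :: "nat \<Rightarrow> 'l::complete_lattice \<Rightarrow> 'l \<Rightarrow> 'l"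
    and n :: nat
    and R :: "'a \<Rightarrow> 'b \<Rightarrow> 'l"
    and \<sigma> :: "'a \<Rightarrow> 'b \<Rightarrow> nat" +
  fixes \<Lambda> :: "'k set" and AA :: "'k \<Rightarrow> 'a set" and BB :: "'k \<Rightarrow> 'b set"
  assumes decomposition: "independent_decomposition cj R \<sigma> \<Lambda> AA BB"
begin

lemma separable_block: "\<mu> \<in> \<Lambda> \<Longrightarrow> separable R (AA \<mu>) (BB \<mu>)"
  using decomposition unfolding independent_decomposition_def by blast

lemma AA_disjoint: "\<mu> \<in> \<Lambda> \<Longrightarrow> \<nu> \<in> \<Lambda> \<Longrightarrow> a \<in> AA \<mu> \<Longrightarrow> a \<in> AA \<nu> \<Longrightarrow> \<mu> = \<nu>"
  using decomposition unfolding independent_decomposition_def by blast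

lemma BB_disjoint: "\<mu> \<in> \<Lambda> \<Longrightarrow> \<nu> \<in> \<Lambda> \<Longrightarrow> b \<in> BB \<mu> \<Longrightarrow> b \<in> BB \<nu> \<Longrightarrow> \<mu> = \<nu>"
  using decomposition unfolding independent_decomposition_def by blast

lemma AA_cover: "\<exists>\<mu>\<in>\<Lambda>. a \<in> AA \<mu>"
  using decomposition unfolding independent_decomposition_def by blast

lemma BB_cover: "\<exists>\<mu>\<in>\<Lambda>. b \<in> BB \<mu>"
  using decomposition unfolding independent_decomposition_def by blast

lemma extent_subset_block:
  assumes "c \<in> \<M>" "\<mu> \<in> \<Lambda>" "a \<in> AA \<mu>" "snd c a \<noteq> bot" "fst c b \<noteq> bot"
  shows "b \<in> BB \<mu>"
proof (rule ccontr)
  assume "b \<notin> BB \<mu>"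
  then have "R a b = bot" "no_zero_divisors (cj (\<sigma> a b))"
    using assms(2,3) separable_block decomposition
    unfolding separable_def independent_decomposition_def by blast+
  then show False
    using intent_or_extent_eq_bot assms(1,4,5) by blast
qed

definition in_block :: "'k \<Rightarrow> ('b \<Rightarrow> 'l) \<times> ('a \<Rightarrow> 'l) \<Rightarrow> bool" where
  "in_block \<mu> c \<longleftrightarrow>
     \<mu> \<in> \<Lambda> \<and> c \<in> \<M> \<and> c \<noteq> ctop \<and> c \<noteq> cbot \<and> (\<exists>b\<in>BB \<mu>. fst c b \<noteq> bot)"

lemma in_block_extent:
  assumes "in_block \<mu> c" "fst c b \<noteq> bot"
  shows "b \<in> BB \<mu>"
proof -
  obtain b0 where b0: "b0 \<in> BB \<mu>" "fst c b0 \<noteq> bot" and c: "c \<in> \<M>" "c \<noteq> ctop" "\<mu> \<in> \<Lambda>"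
    using assms(1) unfolding in_block_def by blast
  obtain a where a: "snd c a \<noteq> bot"
    using ex_intent_ne_bot c by blast
  obtain \<nu> where \<nu>: "\<nu> \<in> \<Lambda>" "a \<in> AA \<nu>"
    using AA_cover by blast
  have "b0 \<in> BB \<nu>" "b \<in> BB \<nu>"
    using extent_subset_block[OF c(1) \<nu> a] b0(2) assms(2) by blast+
  then show ?thesis
    using BB_disjoint[OF c(3) \<nu>(1) b0(1)] by blast
qed

lemma in_block_unique: "in_block \<mu> c \<Longrightarrow> in_block \<nu> c \<Longrightarrow> \<mu> = \<nu>"
  by (metis BB_disjoint in_block_def in_block_extent)

lemma ex_in_block: "c \<in> \<M> \<Longrightarrow> c \<noteq> ctop \<Longrightarrow> c \<noteq> cbot \<Longrightarrow> \<exists>\<mu>. in_block \<mu> c"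
  by (metis BB_cover ex_extent_ne_bot in_block_def)

lemma in_block_nonempty:
  assumes "\<mu> \<in> \<Lambda>"
  shows "\<exists>c. in_block \<mu> c"
proof -
  obtain a b where ab: "b \<in> BB \<mu>" "R a b \<noteq> bot"
    using separable_block[OF assms] unfolding separable_def by blast
  obtain b' where "R a b' = bot"
    using R_normalized unfolding normalized_def by blast
  then have "phi_concept a top \<noteq> ctop"
    using fst_phi_concept_top bot_ne_top by (metis ctop_def fst_conv)
  moreover have "phi_concept a top \<noteq> cbot"
    using ab(2) fst_phi_concept_top by (metis cbot_def fst_conv)
  ultimately have "in_block \<mu> (phi_concept a top)"
    using assms ab fst_phi_concept_top phi_concept_in_concepts unfolding in_block_def by auto
  then show ?thesis ..
qed

lemma in_block_convex:
  assumes "in_block \<mu> k" "x \<in> \<M>" "x \<noteq> ctop" "x \<noteq> cbot" "cle k x \<or> cle x k"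
  shows "in_block \<mu> x"
proof -
  obtain b where "fst k b \<noteq> bot" "fst x b \<noteq> bot"
  proof (cases "cle k x")
    case True
    obtain b where "fst k b \<noteq> bot"
      using assms(1) unfolding in_block_def by blast
    moreover have "fst k b \<le> fst x b"
      using True unfolding cle_def le_fun_def by blast
    ultimately show ?thesis
      using that bot_unique by metis
  next
    case False
    obtain b where "fst x b \<noteq> bot"
      using ex_extent_ne_bot assms(2,4) by blast
    moreover have "fst x b \<le> fst k b"
      using False assms(5) unfolding cle_def le_fun_def by blast
    ultimately show ?thesis
      using that bot_unique by metis
  qed
  then show ?thesis
    using in_block_extent assms unfolding in_block_def by blast
qed

lemma meet_irreducible_above_in_block:
  assumes "in_block \<mu> c" "cle c (phi_concept a x)"
    and "meet_irreducible ld rd R \<sigma> (phi_concept a x)"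
  shows "a \<in> AA \<mu>"
proof -
  obtain b where b: "b \<in> BB \<mu>" "fst c b \<noteq> bot" and "\<mu> \<in> \<Lambda>"
    using assms(1) unfolding in_block_def by blast
  moreover have "fst c b \<le> fst (phi_concept a x) b"
    using assms(2) unfolding cle_def le_fun_def by blast
  ultimately have extent: "fst (phi_concept a x) b \<noteq> bot"
    using bot_unique by metis
  have "x \<noteq> bot"
    using assms(3) phi_concept_bot unfolding meet_irreducible_def by auto
  then have intent: "snd (phi_concept a x) a \<noteq> bot"
    using le_snd_phi_concept bot_unique by metis
  obtain \<nu> where \<nu>: "\<nu> \<in> \<Lambda>" "a \<in> AA \<nu>"
    using AA_cover by blast
  then have "b \<in> BB \<nu>"
    using extent_subset_block[OF phi_concept_in_concepts \<nu> intent extent] by blast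
  then show ?thesis
    using BB_disjoint \<nu> b \<open>\<mu> \<in> \<Lambda>\<close> by blast
qed

lemma Mg_in_block:
  assumes "in_block \<mu> c"
  shows "Mg ld rd R \<sigma> A' c = Mg ld rd R \<sigma> (A' \<inter> AA \<mu>) c"
  using meet_irreducible_above_in_block[OF assms] unfolding set_eq_iff mem_Mg_iff by blast

lemma Kset_eq:
  assumes acc: "acc_concepts ld rd R \<sigma>" and l: "l \<in> \<Lambda>"
  shows "Kset ld rd R \<sigma> (AA l) = Collect (in_block l) \<union> {ctop, cbot}"
proof (intro equalityI subsetI)
  fix c assume c: "c \<in> Collect (in_block l) \<union> {ctop, cbot}"
  have "c \<in> \<M> \<and> c = cInf ld rd R \<sigma> (Mg ld rd R \<sigma> (AA l) c)" if "in_block l c"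
  proof
    show "c \<in> \<M>"
      using that unfolding in_block_def by blast
    have "Mg ld rd R \<sigma> UNIV c = Mg ld rd R \<sigma> (AA l) c"
      using Mg_in_block[OF that, of UNIV] by simp
    then show "c = cInf ld rd R \<sigma> (Mg ld rd R \<sigma> (AA l) c)"
      using concept_eq_cInf_Mg[OF acc \<open>c \<in> \<M>\<close>] by argo
  qed
  with c show "c \<in> Kset ld rd R \<sigma> (AA l)"
    unfolding Kset_def by blast
next
  fix c assume c: "c \<in> Kset ld rd R \<sigma> (AA l)"
  show "c \<in> Collect (in_block l) \<union> {ctop, cbot}"
  proof (cases "c \<in> {ctop, cbot}")
    case False
    then have "c \<in> \<M>" and c_eq: "c = cInf ld rd R \<sigma> (Mg ld rd R \<sigma> (AA l) c)"
      using c unfolding Kset_def by blast+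
    then obtain \<mu> where \<mu>: "in_block \<mu> c"
      using ex_in_block False by blast
    have "\<mu> = l"
    proof (rule ccontr)
      assume "\<mu> \<noteq> l"
      then have "AA l \<inter> AA \<mu> = {}"
        using AA_disjoint l \<mu> unfolding in_block_def by blast
      then have "Mg ld rd R \<sigma> (AA l) c = {}"
        using Mg_in_block[OF \<mu>, of "AA l"] by (simp add: Mg_def MF_def)
      then have "c = ctop"
        using c_eq cInf_empty by argo
      with False show False
        by blast
    qed
    with \<mu> show ?thesis
      by blast
  qed blast
qed

lemma ex_other_block:
  assumes "l \<in> \<Lambda>"
  shows "\<exists>\<mu>\<in>\<Lambda>. \<mu> \<noteq> l"
proof -
  obtain a where "a \<notin> AA l"
    using separable_block[OF assms] unfolding separable_def by blast
  moreover obtain \<mu> where "\<mu> \<in> \<Lambda>" "a \<in> AA \<mu>"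
    using AA_cover by blast
  ultimately show ?thesis
    by auto
qed

lemma in_block_is_complete_block:
  assumes "l \<in> \<Lambda>"
  shows "is_complete_block \<M> cle (\<lambda>c d. cInf ld rd R \<sigma> {c, d}) (\<lambda>c d. cSup ld rd R \<sigma> {c, d})
           cbot ctop (Collect (in_block l) \<union> {ctop, cbot})"
proof (rule is_complete_blockI)
  obtain \<mu> c where "\<mu> \<noteq> l" "in_block \<mu> c"
    using ex_other_block[OF assms] in_block_nonempty by blast
  then have "c \<in> \<M> - (Collect (in_block l) \<union> {ctop, cbot})"
    using in_block_unique unfolding in_block_def by blast
  moreover have "Collect (in_block l) \<subseteq> \<M>"
    unfolding in_block_def by blast
  ultimately show "Collect (in_block l) \<union> {ctop, cbot} \<subset> \<M>"
    using ctop_in_concepts cbot_in_concepts by blast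
  show "Collect (in_block l) \<union> {ctop, cbot} - {cbot, ctop} \<noteq> {}"
    using in_block_nonempty[OF assms] unfolding in_block_def by blast
  show "cle cbot x \<and> cle x ctop" for x :: "('b \<Rightarrow> 'l) \<times> ('a \<Rightarrow> 'l)"
    by (simp add: cbot_cle cle_ctop)
  show "cInf ld rd R \<sigma> {x, y} \<in> \<M> \<and> cle (cInf ld rd R \<sigma> {x, y}) x" if "x \<in> \<M>" "y \<in> \<M>" for x y
    using that by (simp add: cInf_in_concepts fst_cInf cle_def)
  show "cSup ld rd R \<sigma> {x, y} \<in> \<M> \<and> cle x (cSup ld rd R \<sigma> {x, y})" if "x \<in> \<M>" "y \<in> \<M>" for x y
    using that by (simp add: cSup_in_concepts cle_cSup)
  show "cInf ld rd R \<sigma> {x, y} = x \<and> cInf ld rd R \<sigma> {y, x} = x \<and>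
        cSup ld rd R \<sigma> {x, y} = y \<and> cSup ld rd R \<sigma> {y, x} = y"
    if "x \<in> \<M>" "y \<in> \<M>" "cle x y" for x y
    using that by (simp add: cInf_pair_eq_left cSup_pair_eq_right insert_commute)
  show "x \<in> Collect (in_block l) \<union> {ctop, cbot}"
    if "k \<in> Collect (in_block l) \<union> {ctop, cbot} - {cbot, ctop}" "x \<in> \<M> - {cbot, ctop}"
      "cle k x \<or> cle x k" for k x
    using that in_block_convex[of l k x] by auto
qed simp_all

end

theorem proposition31:
  fixes cj ld rd :: "nat \<Rightarrow> 'l::complete_lattice \<Rightarrow> 'l \<Rightarrow> 'l"
    and n :: nat
    and R :: "'a \<Rightarrow> 'b \<Rightarrow> 'l"
    and \<sigma> :: "'a \<Rightarrow> 'b \<Rightarrow> nat"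
    and \<Lambda> :: "'k set"
    and AA :: "'k \<Rightarrow> 'a set"
    and BB :: "'k \<Rightarrow> 'b set"
    and l :: 'k
  assumes "\<forall>i\<in>{1..n}. adjoint_triple (cj i) (ld i) (rd i)"
    and "\<forall>i\<in>{1..n}. \<forall>x. cj i x top = x \<and> cj i top x = x"
    and "\<forall>a b. \<sigma> a b \<in> {1..n}"
    and "normalized R"
    and "acc_concepts ld rd R \<sigma>"
    and "independent_decomposition cj R \<sigma> \<Lambda> AA BB"
    and "l \<in> \<Lambda>"
  shows "is_complete_block (concepts ld rd R \<sigma>) cle
           (\<lambda>c d. cInf ld rd R \<sigma> {c, d}) (\<lambda>c d. cSup ld rd R \<sigma> {c, d})
           cbot ctop (Kset ld rd R \<sigma> (AA l))"
proof -
  interpret decomposed_context cj ld rd n R \<sigma> \<Lambda> AA BB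
    by unfold_locales (use assms in auto)
  show ?thesis
    using Kset_eq[OF assms(5,7)] in_block_is_complete_block[OF assms(7)] by simp
qed

end
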